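(* Let $\alpha,\beta,\gamma\in\Bbbk^n$ and $\mathcal H=\mathcal H(\alpha,\beta,\gamma)$. If $\beta_i=0$ for some $i\in Q_0$, then $\mathcal H$ is not noetherian.
   Context: $\Bbbk$ is an algebraically closed field of characteristic zero. Fix $n\ge1$; indices mod $n$, $Q_0=\{0,\dots,n-1\}$. $Q$ is the quiver with vertices $Q_0$ and arrows $u_i:i\to i+1$, $d_i:i+1\to i$; paths are written left to right, $e_i$ is the trivial path at $i$. $\mathcal H(\alpha,\beta,\gamma)$ is $\Bbbk Q$ modulo the relations $d_{i-1}u_{i-1}u_i=\alpha_iu_id_iu_i+\beta_iu_iu_{i+1}d_{i+1}+\gamma_iu_i$ and $d_id_{i-1}u_{i-1}=\alpha_id_iu_id_i+\beta_iu_{i+1}d_{i+1}d_i+\gamma_id_i$ for all $i\in Q_0$. *)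

theory Defs
  imports "HOL-Algebra.QuotRing" "HOL-Computational_Algebra.Polynomial"
begin

datatype arr = U nat | D nat

fun arr_src :: "nat \<Rightarrow> arr \<Rightarrow> nat" where
  "arr_src n (U i) = i"
| "arr_src n (D i) = (i + 1) mod n"

fun arr_tgt :: "nat \<Rightarrow> arr \<Rightarrow> nat" where
  "arr_tgt n (U i) = (i + 1) mod n"
| "arr_tgt n (D i) = i"

fun arr_idx :: "arr \<Rightarrow> nat" where
  "arr_idx (U i) = i"
| "arr_idx (D i) = i"

text \<open>A path is a pair (start vertex, list of arrows), composed left to right;
  (i, []) is the trivial path e_i.\<close>
type_synonym path = "nat \<times> arr list"

fun valid_arrs :: "nat \<Rightarrow> nat \<Rightarrow> arr list \<Rightarrow> bool" where
  "valid_arrs n i [] = True"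
| "valid_arrs n i (a # as) =
     (arr_idx a < n \<and> arr_src n a = i \<and> valid_arrs n (arr_tgt n a) as)"

definition valid_path :: "nat \<Rightarrow> path \<Rightarrow> bool" where
  "valid_path n p = (fst p < n \<and> valid_arrs n (fst p) (snd p))"

fun end_vertex :: "nat \<Rightarrow> nat \<Rightarrow> arr list \<Rightarrow> nat" where
  "end_vertex n i [] = i"
| "end_vertex n i (a # as) = end_vertex n (arr_tgt n a) as"

definition path_cat :: "nat \<Rightarrow> path \<Rightarrow> path \<Rightarrow> path option" where
  "path_cat n p q =
     (if end_vertex n (fst p) (snd p) = fst q then Some (fst p, snd p @ snd q) else None)"

definition path_algebra :: "nat \<Rightarrow> (path \<Rightarrow> 'k::field) ring" where
  "path_algebra n =
     \<lparr> carrier = {f. finite {p. f p \<noteq> 0} \<and> (\<forall>p. f p \<noteq> 0 \<longrightarrow> valid_path n p)},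
       monoid.mult = (\<lambda>f g p. \<Sum>q\<in>{q. f q \<noteq> 0}. \<Sum>r\<in>{r. g r \<noteq> 0}.
                          (if path_cat n q r = Some p then f q * g r else 0)),
       one = (\<lambda>p. if snd p = [] \<and> fst p < n then 1 else 0),
       zero = (\<lambda>p. 0),
       add = (\<lambda>f g p. f p + g p) \<rparr>"

definition basis_path :: "path \<Rightarrow> (path \<Rightarrow> 'k::field)" where
  "basis_path p = (\<lambda>q. if q = p then 1 else 0)"

definition rel1 :: "nat \<Rightarrow> (nat \<Rightarrow> 'k::field) \<Rightarrow> (nat \<Rightarrow> 'k) \<Rightarrow> (nat \<Rightarrow> 'k) \<Rightarrow> nat
                     \<Rightarrow> (path \<Rightarrow> 'k)" where
  "rel1 n \<alpha> \<beta> \<gamma> i = (\<lambda>p.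
       basis_path (i, [D ((i + n - 1) mod n), U ((i + n - 1) mod n), U i]) p
     - \<alpha> i * basis_path (i, [U i, D i, U i]) p
     - \<beta> i * basis_path (i, [U i, U ((i + 1) mod n), D ((i + 1) mod n)]) p
     - \<gamma> i * basis_path (i, [U i]) p)"

definition rel2 :: "nat \<Rightarrow> (nat \<Rightarrow> 'k::field) \<Rightarrow> (nat \<Rightarrow> 'k) \<Rightarrow> (nat \<Rightarrow> 'k) \<Rightarrow> nat
                     \<Rightarrow> (path \<Rightarrow> 'k)" where
  "rel2 n \<alpha> \<beta> \<gamma> i = (\<lambda>p.
       basis_path ((i + 1) mod n, [D i, D ((i + n - 1) mod n), U ((i + n - 1) mod n)]) p
     - \<alpha> i * basis_path ((i + 1) mod n, [D i, U i, D i]) p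
     - \<beta> i * basis_path ((i + 1) mod n, [U ((i + 1) mod n), D ((i + 1) mod n), D i]) p
     - \<gamma> i * basis_path ((i + 1) mod n, [D i]) p)"

definition H_rels :: "nat \<Rightarrow> (nat \<Rightarrow> 'k::field) \<Rightarrow> (nat \<Rightarrow> 'k) \<Rightarrow> (nat \<Rightarrow> 'k)
                      \<Rightarrow> (path \<Rightarrow> 'k) set" where
  "H_rels n \<alpha> \<beta> \<gamma> = (\<Union>i\<in>{..<n}. {rel1 n \<alpha> \<beta> \<gamma> i, rel2 n \<alpha> \<beta> \<gamma> i})"

definition H_alg :: "nat \<Rightarrow> (nat \<Rightarrow> 'k::field) \<Rightarrow> (nat \<Rightarrow> 'k) \<Rightarrow> (nat \<Rightarrow> 'k)
                     \<Rightarrow> ((path \<Rightarrow> 'k) set) ring" where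
  "H_alg n \<alpha> \<beta> \<gamma> =
     path_algebra n Quot genideal (path_algebra n) (H_rels n \<alpha> \<beta> \<gamma>)"

definition left_ideal :: "'a set \<Rightarrow> ('a, 'b) ring_scheme \<Rightarrow> bool" where
  "left_ideal J R = (additive_subgroup J R \<and> (\<forall>a\<in>carrier R. \<forall>x\<in>J. a \<otimes>\<^bsub>R\<^esub> x \<in> J))"

definition right_ideal :: "'a set \<Rightarrow> ('a, 'b) ring_scheme \<Rightarrow> bool" where
  "right_ideal J R = (additive_subgroup J R \<and> (\<forall>a\<in>carrier R. \<forall>x\<in>J. x \<otimes>\<^bsub>R\<^esub> a \<in> J))"

definition left_noetherian :: "('a, 'b) ring_scheme \<Rightarrow> bool" where
  "left_noetherian R = (\<forall>I :: nat \<Rightarrow> 'a set.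
      (\<forall>k. left_ideal (I k) R) \<and> (\<forall>k. I k \<subseteq> I (Suc k)) \<longrightarrow> (\<exists>N. \<forall>m\<ge>N. I m = I N))"

definition right_noetherian :: "('a, 'b) ring_scheme \<Rightarrow> bool" where
  "right_noetherian R = (\<forall>I :: nat \<Rightarrow> 'a set.
      (\<forall>k. right_ideal (I k) R) \<and> (\<forall>k. I k \<subseteq> I (Suc k)) \<longrightarrow> (\<exists>N. \<forall>m\<ge>N. I m = I N))"

definition noetherian :: "('a, 'b) ring_scheme \<Rightarrow> bool" where
  "noetherian R = (left_noetherian R \<and> right_noetherian R)"

end

theory Submission
  imports Defs
begin

(*
  For 0 <= m let e_m be a basis vector placed at the vertex i - m (mod n).  Let the arrow u
  raise the index, e_m |-> c_m e_(m+1), and let d lower it, e_m |-> e_(m-1) (and e_0 |-> 0),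
  both only between the matching vertices.  Both defining relations of H, evaluated on e_m,
  come down to the recurrence c_(m+1) = alpha c_m + beta c_(m-1) + gamma (with c_(-1) = 0 and
  the coefficients taken at the vertex of e_(m+1)); so defining the c_m by this recurrence
  turns the span of the e_m into an H-module, for arbitrary alpha, beta, gamma.

  Now let beta_i = 0 and x_N = e_i (d_(i-1) u_(i-1) - alpha_i u_i d_i - gamma_i) d^N.  On a basis
  vector e_(l+1) at vertex i the bracket acts by c_(l+1) - alpha_i c_l - gamma_i = beta_i c_(l-1) = 0,
  so x_N kills every e_m with m > N; with the start value c_0 = gamma_i + 1 it maps e_N to e_0.
  Hence the annihilators of span {e_m | m >= k} form a strictly ascending chain of left ideals,
  and H is not left noetherian.
*)

section \<open>Left ideals and surjective ring homomorphisms\<close>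

lemma additive_subgroup_closedI:
  fixes R (structure)
  assumes "ring R" "S \<subseteq> carrier R" "\<zero> \<in> S" "\<And>x y. x \<in> S \<Longrightarrow> y \<in> S \<Longrightarrow> x \<oplus> y \<in> S"
    "\<And>x. x \<in> S \<Longrightarrow> \<ominus> x \<in> S"
  shows "additive_subgroup S R"
  using assms by (intro additive_subgroupI subgroup.intro) (simp_all add: a_inv_def[symmetric])

lemma (in ring_hom_ring) left_ideal_image:
  assumes surj: "h ` carrier R = carrier S" and L: "left_ideal L R"
  shows "left_ideal (h ` L) S"
  unfolding left_ideal_def
proof
  have L_sub: "additive_subgroup L R" using L by (simp add: left_ideal_def)
  then show "additive_subgroup (h ` L) S"
    by (simp add: additive_subgroup_def img_is_add_subgroup)
  show "\<forall>s\<in>carrier S. \<forall>x\<in>h ` L. s \<otimes>\<^bsub>S\<^esub> x \<in> h ` L"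
  proof (intro ballI)
    fix s x assume "s \<in> carrier S" "x \<in> h ` L"
    then obtain a l where a: "a \<in> carrier R" "s = h a" and l: "l \<in> L" "x = h l"
      using surj by blast
    have "l \<in> carrier R" using additive_subgroup.a_Hcarr[OF L_sub l(1)] .
    then have "s \<otimes>\<^bsub>S\<^esub> x = h (a \<otimes> l)" using a l by simp
    moreover have "a \<otimes> l \<in> L" using L a(1) l(1) by (simp add: left_ideal_def)
    ultimately show "s \<otimes>\<^bsub>S\<^esub> x \<in> h ` L" by blast
  qed
qed

lemma (in ring_hom_ring) mem_of_image_mem:
  assumes L: "additive_subgroup L R" and ker: "a_kernel R S h \<subseteq> L"
    and a: "a \<in> carrier R" "h a \<in> h ` L"
  shows "a \<in> L"
proof -
  interpret L: additive_subgroup L R by (rule L)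
  obtain l where l: "l \<in> L" "h a = h l" using a(2) by blast
  have l_carr: "l \<in> carrier R" using l(1) by (rule L.a_Hcarr)
  have "h (a \<ominus> l) = h l \<ominus>\<^bsub>S\<^esub> h l"
    using a(1) l_carr l(2) by (simp add: a_minus_def)
  also have "\<dots> = \<zero>\<^bsub>S\<^esub>"
    using l_carr by (simp add: S.r_neg a_minus_def)
  finally have "a \<ominus> l \<in> a_kernel R S h"
    unfolding a_kernel_def' using R.minus_closed[OF a(1) l_carr] by blast
  then have "(a \<ominus> l) \<oplus> l \<in> L" using ker l(1) by (intro L.a_closed) auto
  also have "(a \<ominus> l) \<oplus> l = a"
    using a(1) l_carr by (simp add: a_minus_def R.add.m_assoc R.l_neg)
  finally show "a \<in> L" .
qed

lemma (in ring_hom_ring) not_left_noetherian_image: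
  assumes surj: "h ` carrier R = carrier S"
    and L: "\<And>k. left_ideal (L k) R" "\<And>k. a_kernel R S h \<subseteq> L k"
    and chain: "\<And>k. L k \<subseteq> L (Suc k)" "\<And>k. \<not> L (Suc k) \<subseteq> L k"
  shows "\<not> left_noetherian S"
proof
  assume noeth: "left_noetherian S"
  have "(\<forall>k. left_ideal (h ` L k) S) \<and> (\<forall>k. h ` L k \<subseteq> h ` L (Suc k))"
    using left_ideal_image[OF surj L(1)] chain(1) by (simp add: image_mono)
  then obtain N where "\<forall>m\<ge>N. h ` L m = h ` L N"
    using spec[OF noeth[unfolded left_noetherian_def], of "\<lambda>k. h ` L k"] by blast
  then have stable: "h ` L (Suc N) = h ` L N" using le_SucI[OF order_refl] by blast
  obtain a where a: "a \<in> L (Suc N)" "a \<notin> L N" using chain(2)[of N] by auto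
  have L_sub: "additive_subgroup (L k) R" for k using L(1) by (simp add: left_ideal_def)
  have "a \<in> carrier R" using additive_subgroup.a_Hcarr[OF L_sub a(1)] .
  moreover have "h a \<in> h ` L N" using imageI[OF a(1), of h] unfolding stable .
  ultimately have "a \<in> L N" by (rule mem_of_image_mem[OF L_sub L(2)])
  with a(2) show False ..
qed

lemma (in ideal) rcos_surj: "(+>) I ` carrier R = carrier (R Quot I)"
  unfolding FactRing_def A_RCOSETS_def' by auto

lemma (in ideal) a_kernel_rcos: "a_kernel R (R Quot I) ((+>) I) = I"
proof -
  have "x \<in> carrier R \<and> I +> x = I \<longleftrightarrow> x \<in> I" for x
    using rcos_const_imp_mem a_rcos_zero[OF ideal_axioms] Icarr by metis
  then show ?thesis
    unfolding a_kernel_def' FactRing_def by simp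
qed

section \<open>Paths\<close>

lemma end_vertex_append:
  "end_vertex n i (as @ bs) = end_vertex n (end_vertex n i as) bs"
  by (induction as arbitrary: i) auto

lemma valid_arrs_append:
  "valid_arrs n i (as @ bs) \<longleftrightarrow> valid_arrs n i as \<and> valid_arrs n (end_vertex n i as) bs"
  by (induction as arbitrary: i) auto

lemma end_vertex_less:
  assumes "0 < n" "i < n" "valid_arrs n i as"
  shows "end_vertex n i as < n"
proof -
  have "arr_tgt n a < n" if "arr_idx a < n" for a using that assms(1) by (cases a) auto
  with assms(2,3) show ?thesis by (induction as arbitrary: i) auto
qed

lemma valid_path_cat:
  "path_cat n q r = Some p \<Longrightarrow> valid_path n q \<Longrightarrow> valid_path n r \<Longrightarrow> valid_path n p"
  by (auto simp: path_cat_def valid_path_def valid_arrs_append split: if_splits)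

lemma path_cat_assoc:
  "Option.bind (path_cat n q r) (\<lambda>s. path_cat n s t) = Option.bind (path_cat n r t) (path_cat n q)"
  by (auto simp: path_cat_def end_vertex_append)

lemma path_cat_trivial_left: "path_cat n (j, []) r = Some p \<longleftrightarrow> r = p \<and> fst p = j"
  by (cases r; cases p) (auto simp: path_cat_def)

lemma path_cat_trivial_right:
  "path_cat n q (j, []) = Some p \<longleftrightarrow> q = p \<and> end_vertex n (fst q) (snd q) = j"
  by (cases q; cases p) (auto simp: path_cat_def)

lemma pred_mod_Suc_mod: "(j::nat) < n \<Longrightarrow> ((j + 1) mod n + n - 1) mod n = j"
proof (cases "j + 1 = n")
  case False
  assume "j < n"
  then have "(j + 1) mod n = j + 1" using False by simp
  then show ?thesis using \<open>j < n\<close> by (simp add: add.commute)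
qed simp

lemma Suc_mod_pred_mod: "(j::nat) < n \<Longrightarrow> ((j + n - 1) mod n + 1) mod n = j"
proof (cases j)
  case (Suc k)
  assume "j < n"
  then have "(j + n - 1) mod n = k" using Suc by simp
  then show ?thesis using \<open>j < n\<close> Suc by simp
qed (simp add: mod_Suc)

fun down_arrs :: "nat \<Rightarrow> nat \<Rightarrow> nat \<Rightarrow> arr list" where
  "down_arrs n 0 j = []"
| "down_arrs n (Suc k) j = D ((j + n - 1) mod n) # down_arrs n k ((j + n - 1) mod n)"

lemma valid_down_arrs: "j < n \<Longrightarrow> valid_arrs n j (down_arrs n k j)"
  by (induction k arbitrary: j) (use Suc_mod_pred_mod in auto)

lemma U_notin_down_arrs: "U x \<notin> set (down_arrs n k j)"
  by (induction k arbitrary: j) auto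

section \<open>The path algebra is a ring\<close>

lemma sum_if_Some:
  assumes "finite T" "\<And>s. x = Some s \<Longrightarrow> s \<in> T"
  shows "(\<Sum>s\<in>T. if x = Some s then F s else 0) = (case x of None \<Rightarrow> 0 | Some s \<Rightarrow> F s)"
proof (cases x)
  case (Some s0)
  have "(\<Sum>s\<in>T. if x = Some s then F s else 0) = (\<Sum>s\<in>T. if s = s0 then F s else 0)"
    using Some by (intro sum.cong) auto
  also have "\<dots> = F s0" using assms Some by (simp add: sum.delta')
  finally show ?thesis using Some by simp
qed simp

lemma sum_if_Some_conj:
  assumes "finite T" "\<And>s. x = Some s \<Longrightarrow> s \<in> T"
  shows "(\<Sum>s\<in>T. if x = Some s \<and> P s then c else 0) = (if \<exists>s. x = Some s \<and> P s then c else 0)"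
proof -
  have "(\<Sum>s\<in>T. if x = Some s \<and> P s then c else 0) = (\<Sum>s\<in>T. if x = Some s then (if P s then c else 0) else 0)"
    by (intro sum.cong) auto
  also have "\<dots> = (case x of None \<Rightarrow> 0 | Some s \<Rightarrow> if P s then c else 0)"
    using assms by (rule sum_if_Some)
  finally show ?thesis by (cases x) auto
qed

lemma sum_rotate3:
  "(\<Sum>s\<in>S. \<Sum>r\<in>B. \<Sum>t\<in>C. F s r t) = (\<Sum>r\<in>B. \<Sum>t\<in>C. \<Sum>s\<in>S. F s r t)"
proof -
  have "(\<Sum>s\<in>S. \<Sum>r\<in>B. \<Sum>t\<in>C. F s r t) = (\<Sum>r\<in>B. \<Sum>s\<in>S. \<Sum>t\<in>C. F s r t)"
    by (rule sum.swap)
  also have "\<dots> = (\<Sum>r\<in>B. \<Sum>t\<in>C. \<Sum>s\<in>S. F s r t)"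
    by (rule sum.cong[OF refl], rule sum.swap)
  finally show ?thesis .
qed

lemma sum_rotate4:
  "(\<Sum>s\<in>S. \<Sum>t\<in>C. \<Sum>q\<in>A. \<Sum>r\<in>B. F s t q r) = (\<Sum>q\<in>A. \<Sum>r\<in>B. \<Sum>t\<in>C. \<Sum>s\<in>S. F s t q r)"
proof -
  have "(\<Sum>s\<in>S. \<Sum>t\<in>C. \<Sum>q\<in>A. \<Sum>r\<in>B. F s t q r) = (\<Sum>s\<in>S. \<Sum>q\<in>A. \<Sum>r\<in>B. \<Sum>t\<in>C. F s t q r)"
    by (rule sum.cong[OF refl], rule sum_rotate3)
  also have "\<dots> = (\<Sum>q\<in>A. \<Sum>r\<in>B. \<Sum>s\<in>S. \<Sum>t\<in>C. F s t q r)"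
    by (rule sum_rotate3)
  also have "\<dots> = (\<Sum>q\<in>A. \<Sum>r\<in>B. \<Sum>t\<in>C. \<Sum>s\<in>S. F s t q r)"
    by (rule sum.cong[OF refl], rule sum.cong[OF refl], rule sum.swap)
  finally show ?thesis .
qed

abbreviation supp :: "(path \<Rightarrow> 'k::zero) \<Rightarrow> path set" where
  "supp f \<equiv> {p. f p \<noteq> 0}"

definition path_conv :: "nat \<Rightarrow> path set \<Rightarrow> path set \<Rightarrow> (path \<Rightarrow> 'k::field) \<Rightarrow> (path \<Rightarrow> 'k) \<Rightarrow> path \<Rightarrow> 'k" where
  "path_conv n A B f g p = (\<Sum>q\<in>A. \<Sum>r\<in>B. if path_cat n q r = Some p then f q * g r else 0)"

definition path_products :: "nat \<Rightarrow> path set \<Rightarrow> path set \<Rightarrow> path set" where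
  "path_products n A B = {p. \<exists>q\<in>A. \<exists>r\<in>B. path_cat n q r = Some p}"

lemma finite_path_products: "finite A \<Longrightarrow> finite B \<Longrightarrow> finite (path_products n A B)"
proof -
  assume "finite A" "finite B"
  moreover have "path_products n A B \<subseteq> (\<lambda>(q, r). the (path_cat n q r)) ` (A \<times> B)"
    by (force simp: path_products_def)
  ultimately show ?thesis by (meson finite_SigmaI finite_imageI finite_subset)
qed

lemma supp_path_conv: "supp (path_conv n A B f g) \<subseteq> path_products n A B"
proof
  fix p assume "p \<in> supp (path_conv n A B f g)"
  then have "\<not> (\<forall>q\<in>A. \<forall>r\<in>B. path_cat n q r \<noteq> Some p)"
    by (auto simp: path_conv_def intro: sum.neutral)
  then show "p \<in> path_products n A B" by (auto simp: path_products_def)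
qed

lemma path_conv_add_left: "path_conv n A B (\<lambda>p. f p + g p) h p = path_conv n A B f h p + path_conv n A B g h p"
  unfolding path_conv_def sum.distrib[symmetric] by (intro sum.cong refl) (simp add: distrib_right)

lemma path_conv_add_right: "path_conv n A B h (\<lambda>p. f p + g p) p = path_conv n A B h f p + path_conv n A B h g p"
  unfolding path_conv_def sum.distrib[symmetric] by (intro sum.cong refl) (simp add: distrib_left)

lemma path_conv_eq_triple_sum_left:
  assumes "finite T" "\<And>q r s. q \<in> A \<Longrightarrow> r \<in> B \<Longrightarrow> path_cat n q r = Some s \<Longrightarrow> s \<in> T"
  shows "path_conv n T C (path_conv n A B f g) h p
    = (\<Sum>q\<in>A. \<Sum>r\<in>B. \<Sum>t\<in>C. if Option.bind (path_cat n q r) (\<lambda>s. path_cat n s t) = Some p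
          then f q * g r * h t else 0)"
proof -
  have "path_conv n T C (path_conv n A B f g) h p
     = (\<Sum>s\<in>T. \<Sum>t\<in>C. \<Sum>q\<in>A. \<Sum>r\<in>B.
          if path_cat n q r = Some s \<and> path_cat n s t = Some p then f q * g r * h t else 0)"
    unfolding path_conv_def
    by (intro sum.cong refl) (auto simp: sum_distrib_right intro!: sum.cong)
  also have "\<dots> = (\<Sum>q\<in>A. \<Sum>r\<in>B. \<Sum>t\<in>C. \<Sum>s\<in>T.
          if path_cat n q r = Some s \<and> path_cat n s t = Some p then f q * g r * h t else 0)"
    by (rule sum_rotate4)
  also have "\<dots> = (\<Sum>q\<in>A. \<Sum>r\<in>B. \<Sum>t\<in>C. if Option.bind (path_cat n q r) (\<lambda>s. path_cat n s t) = Some p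
          then f q * g r * h t else 0)"
    using assms by (intro sum.cong refl) (simp add: sum_if_Some_conj bind_eq_Some_conv)
  finally show ?thesis .
qed

lemma path_conv_eq_triple_sum_right:
  assumes "finite T" "\<And>r t s. r \<in> B \<Longrightarrow> t \<in> C \<Longrightarrow> path_cat n r t = Some s \<Longrightarrow> s \<in> T"
  shows "path_conv n A T f (path_conv n B C g h) p
    = (\<Sum>q\<in>A. \<Sum>r\<in>B. \<Sum>t\<in>C. if Option.bind (path_cat n r t) (path_cat n q) = Some p
          then f q * g r * h t else 0)"
proof -
  have "path_conv n A T f (path_conv n B C g h) p
     = (\<Sum>q\<in>A. \<Sum>s\<in>T. \<Sum>r\<in>B. \<Sum>t\<in>C.
          if path_cat n r t = Some s \<and> path_cat n q s = Some p then f q * g r * h t else 0)"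
    unfolding path_conv_def
    by (intro sum.cong refl) (auto simp: sum_distrib_left mult.assoc intro!: sum.cong)
  also have "\<dots> = (\<Sum>q\<in>A. \<Sum>r\<in>B. \<Sum>t\<in>C. \<Sum>s\<in>T.
          if path_cat n r t = Some s \<and> path_cat n q s = Some p then f q * g r * h t else 0)"
    by (rule sum.cong[OF refl], rule sum_rotate3)
  also have "\<dots> = (\<Sum>q\<in>A. \<Sum>r\<in>B. \<Sum>t\<in>C. if Option.bind (path_cat n r t) (path_cat n q) = Some p
          then f q * g r * h t else 0)"
    using assms by (intro sum.cong refl) (simp add: sum_if_Some_conj bind_eq_Some_conv)
  finally show ?thesis .
qed

lemma path_algebra_carrier_iff:
  "f \<in> carrier (path_algebra n) \<longleftrightarrow> finite (supp f) \<and> (\<forall>p. f p \<noteq> 0 \<longrightarrow> valid_path n p)"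
  by (simp add: path_algebra_def)

lemma path_algebra_carrierI:
  assumes "finite S" "supp f \<subseteq> S" "\<And>p. p \<in> S \<Longrightarrow> valid_path n p"
  shows "f \<in> carrier (path_algebra n)"
  using assms by (auto simp: path_algebra_carrier_iff intro: finite_subset)

lemma path_algebra_mult: "f \<otimes>\<^bsub>path_algebra n\<^esub> g = path_conv n (supp f) (supp g) f g"
  by (simp add: path_algebra_def path_conv_def fun_eq_iff)

lemma path_algebra_add: "f \<oplus>\<^bsub>path_algebra n\<^esub> g = (\<lambda>p. f p + g p)"
  by (simp add: path_algebra_def)

lemma path_algebra_zero: "\<zero>\<^bsub>path_algebra n\<^esub> = (\<lambda>p. 0)"
  by (simp add: path_algebra_def)

lemma path_algebra_one: "\<one>\<^bsub>path_algebra n\<^esub> = (\<lambda>p. if snd p = [] \<and> fst p < n then 1 else 0)"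
  by (simp add: path_algebra_def)

lemma path_algebra_mult_eq_conv:
  assumes "finite A" "finite B" "supp f \<subseteq> A" "supp g \<subseteq> B"
  shows "(f \<otimes>\<^bsub>path_algebra n\<^esub> g) p = path_conv n A B f g p"
proof -
  have fA: "finite (supp f)" "finite (supp g)" using assms finite_subset by auto
  have "path_conv n (supp f) (supp g) f g p = path_conv n A (supp g) f g p"
    unfolding path_conv_def
  proof (rule sum.mono_neutral_left)
    show "\<forall>i\<in>A - supp f. (\<Sum>r\<in>supp g. if path_cat n i r = Some p then f i * g r else 0) = 0"
    proof
      fix i assume "i \<in> A - supp f"
      then have "f i = 0" by simp
      then show "(\<Sum>r\<in>supp g. if path_cat n i r = Some p then f i * g r else 0) = 0"
        by (simp only: mult_zero_left if_cancel sum.neutral_const)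
    qed
  qed (use assms fA in auto)
  also have "\<dots> = path_conv n A B f g p"
    unfolding path_conv_def by (intro sum.cong refl sum.mono_neutral_left) (use assms fA in auto)
  finally show ?thesis by (simp add: path_algebra_mult)
qed

lemma supp_path_algebra_mult:
  "supp (f \<otimes>\<^bsub>path_algebra n\<^esub> g) \<subseteq> path_products n (supp f) (supp g)"
  unfolding path_algebra_mult by (rule supp_path_conv)

lemma supp_add_subset: "supp (\<lambda>p. f p + g p) \<subseteq> supp f \<union> supp (g :: path \<Rightarrow> 'a::monoid_add)"
  by auto

lemma path_algebra_add_closed:
  assumes "f \<in> carrier (path_algebra n)" "g \<in> carrier (path_algebra n)"
  shows "(\<lambda>p. f p + g p) \<in> carrier (path_algebra n)"
  using assms supp_add_subset[of f g]
  by (intro path_algebra_carrierI[of "supp f \<union> supp g"]) (auto simp: path_algebra_carrier_iff)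

lemma path_algebra_mult_closed:
  assumes "f \<in> carrier (path_algebra n)" "g \<in> carrier (path_algebra n)"
  shows "f \<otimes>\<^bsub>path_algebra n\<^esub> g \<in> carrier (path_algebra n)"
proof -
  let ?A = "supp f" and ?B = "supp g"
  have fin: "finite ?A" "finite ?B" using assms by (auto simp: path_algebra_carrier_iff)
  have sub: "{p. (f \<otimes>\<^bsub>path_algebra n\<^esub> g) p \<noteq> 0} \<subseteq> path_products n ?A ?B"
    by (rule supp_path_algebra_mult)
  moreover have "finite (path_products n ?A ?B)" using fin finite_path_products by blast
  moreover have "valid_path n p" if pT: "p \<in> path_products n ?A ?B" for p
  proof -
    obtain q r where "f q \<noteq> 0" "g r \<noteq> 0" "path_cat n q r = Some p" using pT by (auto simp: path_products_def)
    moreover have "valid_path n q" "valid_path n r" using calculation assms unfolding path_algebra_carrier_iff by blast+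
    ultimately show ?thesis using valid_path_cat by blast
  qed
  ultimately show ?thesis by (auto simp: path_algebra_carrier_iff intro: finite_subset)
qed

lemma path_algebra_mult_assoc:
  assumes "f \<in> carrier (path_algebra n)" "g \<in> carrier (path_algebra n)" "h \<in> carrier (path_algebra n)"
  shows "(f \<otimes>\<^bsub>path_algebra n\<^esub> g) \<otimes>\<^bsub>path_algebra n\<^esub> h = f \<otimes>\<^bsub>path_algebra n\<^esub> (g \<otimes>\<^bsub>path_algebra n\<^esub> h)"
proof
  fix p
  let ?A = "supp f" and ?B = "supp g" and ?C = "supp h"
  have fin: "finite ?A" "finite ?B" "finite ?C" using assms by (auto simp: path_algebra_carrier_iff)
  have fT: "finite (path_products n ?A ?B)" "finite (path_products n ?B ?C)" using fin finite_path_products by auto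
  have s1: "{p. (f \<otimes>\<^bsub>path_algebra n\<^esub> g) p \<noteq> 0} \<subseteq> path_products n ?A ?B"
    by (rule supp_path_algebra_mult)
  have s2: "{p. (g \<otimes>\<^bsub>path_algebra n\<^esub> h) p \<noteq> 0} \<subseteq> path_products n ?B ?C"
    by (rule supp_path_algebra_mult)
  have "((f \<otimes>\<^bsub>path_algebra n\<^esub> g) \<otimes>\<^bsub>path_algebra n\<^esub> h) p
      = path_conv n (path_products n ?A ?B) ?C (f \<otimes>\<^bsub>path_algebra n\<^esub> g) h p"
    by (rule path_algebra_mult_eq_conv) (use fin s1 fT in auto)
  also have "\<dots> = (\<Sum>q\<in>?A. \<Sum>r\<in>?B. \<Sum>t\<in>?C. if Option.bind (path_cat n q r) (\<lambda>s. path_cat n s t) = Some p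
          then f q * g r * h t else 0)"
    unfolding path_algebra_mult by (rule path_conv_eq_triple_sum_left) (use fin fT in \<open>auto simp: path_products_def\<close>)
  also have "\<dots> = (\<Sum>q\<in>?A. \<Sum>r\<in>?B. \<Sum>t\<in>?C. if Option.bind (path_cat n r t) (\<lambda>s. path_cat n q s) = Some p
          then f q * g r * h t else 0)"
    by (simp only: path_cat_assoc)
  also have "\<dots> = path_conv n ?A (path_products n ?B ?C) f (g \<otimes>\<^bsub>path_algebra n\<^esub> h) p"
    unfolding path_algebra_mult by (rule path_conv_eq_triple_sum_right[symmetric]) (use fin fT in \<open>auto simp: path_products_def\<close>)
  also have "\<dots> = (f \<otimes>\<^bsub>path_algebra n\<^esub> (g \<otimes>\<^bsub>path_algebra n\<^esub> h)) p"
    by (rule path_algebra_mult_eq_conv[symmetric]) (use fin s2 fT in auto)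
  finally show "((f \<otimes>\<^bsub>path_algebra n\<^esub> g) \<otimes>\<^bsub>path_algebra n\<^esub> h) p = (f \<otimes>\<^bsub>path_algebra n\<^esub> (g \<otimes>\<^bsub>path_algebra n\<^esub> h)) p" .
qed

lemma supp_path_algebra_one: "{p. (\<one>\<^bsub>path_algebra n\<^esub>::path\<Rightarrow>'k::field) p \<noteq> 0} \<subseteq> (\<lambda>j. (j, [])) ` {..<n}"
  by (auto simp: path_algebra_one)

lemma path_algebra_one_trivial: "j < n \<Longrightarrow> (\<one>\<^bsub>path_algebra n\<^esub>::path\<Rightarrow>'k::field) (j, []) = 1"
  by (simp add: path_algebra_one)

lemma path_algebra_one_closed: "\<one>\<^bsub>path_algebra n\<^esub> \<in> carrier (path_algebra n :: (path \<Rightarrow> 'k::field) ring)"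
  unfolding path_algebra_carrier_iff
proof (intro conjI allI impI)
  show "finite {p. (\<one>\<^bsub>path_algebra n\<^esub>::path \<Rightarrow> 'k) p \<noteq> 0}"
    using supp_path_algebra_one by (rule finite_subset) simp
  fix p assume "(\<one>\<^bsub>path_algebra n\<^esub>::path \<Rightarrow> 'k) p \<noteq> 0"
  then show "valid_path n p" by (cases p) (auto simp: path_algebra_one valid_path_def split: if_splits)
qed

lemma path_algebra_l_one:
  assumes "f \<in> carrier (path_algebra n)"
  shows "\<one>\<^bsub>path_algebra n\<^esub> \<otimes>\<^bsub>path_algebra n\<^esub> f = (f::path\<Rightarrow>'k::field)"
proof
  fix p
  let ?B = "supp f"
  have fin: "finite ?B" using assms by (auto simp: path_algebra_carrier_iff)
  have "(\<one>\<^bsub>path_algebra n\<^esub> \<otimes>\<^bsub>path_algebra n\<^esub> f) p = path_conv n ((\<lambda>j. (j, [])) ` {..<n}) ?B \<one>\<^bsub>path_algebra n\<^esub> f p"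
    by (rule path_algebra_mult_eq_conv) (use fin supp_path_algebra_one in auto)
  also have "\<dots> = (\<Sum>j\<in>{..<n}. \<Sum>r\<in>?B. if path_cat n (j, []) r = Some p then \<one>\<^bsub>path_algebra n\<^esub> (j, []) * f r else 0)"
    unfolding path_conv_def by (subst sum.reindex) (auto simp: inj_on_def)
  also have "\<dots> = (\<Sum>j\<in>{..<n}. if fst p = j then (if p \<in> ?B then f p else 0) else 0)"
  proof (intro sum.cong refl)
    fix j assume j: "j \<in> {..<n}"
    have "(\<Sum>r\<in>?B. if path_cat n (j, []) r = Some p then \<one>\<^bsub>path_algebra n\<^esub> (j, []) * f r else 0)
        = (\<Sum>r\<in>?B. if r = p then (if fst p = j then f r else 0) else 0)"
      using j by (intro sum.cong refl) (auto simp: path_cat_trivial_left path_algebra_one_trivial)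
    also have "\<dots> = (if fst p = j then (if p \<in> ?B then f p else 0) else 0)"
      using fin by (simp add: sum.delta)
    finally show "(\<Sum>r\<in>?B. if path_cat n (j, []) r = Some p then \<one>\<^bsub>path_algebra n\<^esub> (j, []) * f r else 0)
        = (if fst p = j then (if p \<in> ?B then f p else 0) else 0)" .
  qed
  also have "\<dots> = f p"
  proof (cases "f p = 0")
    case True then show ?thesis by simp
  next
    case False
    have "valid_path n p" using assms False unfolding path_algebra_carrier_iff by blast
    then have "fst p < n" by (simp add: valid_path_def)
    then show ?thesis using False by (simp add: sum.delta)
  qed
  finally show "(\<one>\<^bsub>path_algebra n\<^esub> \<otimes>\<^bsub>path_algebra n\<^esub> f) p = f p" .
qed

lemma path_algebra_r_one:
  assumes "f \<in> carrier (path_algebra n)" "0 < n"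
  shows "f \<otimes>\<^bsub>path_algebra n\<^esub> \<one>\<^bsub>path_algebra n\<^esub> = (f::path\<Rightarrow>'k::field)"
proof
  fix p
  let ?A = "supp f"
  have fin: "finite ?A" using assms by (auto simp: path_algebra_carrier_iff)
  have "(f \<otimes>\<^bsub>path_algebra n\<^esub> \<one>\<^bsub>path_algebra n\<^esub>) p = path_conv n ?A ((\<lambda>j. (j, [])) ` {..<n}) f \<one>\<^bsub>path_algebra n\<^esub> p"
    by (rule path_algebra_mult_eq_conv) (use fin supp_path_algebra_one in auto)
  also have "\<dots> = (\<Sum>q\<in>?A. \<Sum>j\<in>{..<n}. if path_cat n q (j, []) = Some p then f q * \<one>\<^bsub>path_algebra n\<^esub> (j, []) else 0)"
    unfolding path_conv_def by (intro sum.cong refl, subst sum.reindex) (auto simp: inj_on_def)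
  also have "\<dots> = (\<Sum>q\<in>?A. if q = p then f q else 0)"
  proof (intro sum.cong refl)
    fix q assume q: "q \<in> ?A"
    have "valid_path n q" using assms q unfolding path_algebra_carrier_iff by blast
    then have e: "end_vertex n (fst q) (snd q) < n"
      using assms by (intro end_vertex_less) (auto simp: valid_path_def)
    have "(\<Sum>j\<in>{..<n}. if path_cat n q (j, []) = Some p then f q * \<one>\<^bsub>path_algebra n\<^esub> (j, []) else 0)
        = (\<Sum>j\<in>{..<n}. if j = end_vertex n (fst q) (snd q) then (if q = p then f q else 0) else 0)"
      by (intro sum.cong refl) (auto simp: path_cat_trivial_right path_algebra_one_trivial)
    also have "\<dots> = (if q = p then f q else 0)" using e by (simp add: sum.delta')
    finally show "(\<Sum>j\<in>{..<n}. if path_cat n q (j, []) = Some p then f q * \<one>\<^bsub>path_algebra n\<^esub> (j, []) else 0)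
        = (if q = p then f q else 0)" .
  qed
  also have "\<dots> = f p" using fin by (simp add: sum.delta')
  finally show "(f \<otimes>\<^bsub>path_algebra n\<^esub> \<one>\<^bsub>path_algebra n\<^esub>) p = f p" .
qed

lemma path_algebra_l_distr:
  assumes "x \<in> carrier (path_algebra n)" "y \<in> carrier (path_algebra n)" "z \<in> carrier (path_algebra n)"
  shows "(x \<oplus>\<^bsub>path_algebra n\<^esub> y) \<otimes>\<^bsub>path_algebra n\<^esub> z
     = (x \<otimes>\<^bsub>path_algebra n\<^esub> z) \<oplus>\<^bsub>path_algebra n\<^esub> (y \<otimes>\<^bsub>path_algebra n\<^esub> (z::path\<Rightarrow>'k::field))"
proof
  fix p
  let ?A = "supp x \<union> supp y" and ?B = "supp z"
  have fin: "finite ?A" "finite ?B" using assms by (auto simp: path_algebra_carrier_iff)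
  have "((x \<oplus>\<^bsub>path_algebra n\<^esub> y) \<otimes>\<^bsub>path_algebra n\<^esub> z) p = path_conv n ?A ?B (\<lambda>p. x p + y p) z p"
    unfolding path_algebra_add by (rule path_algebra_mult_eq_conv) (use fin supp_add_subset in auto)
  also have "\<dots> = path_conv n ?A ?B x z p + path_conv n ?A ?B y z p" by (rule path_conv_add_left)
  also have "\<dots> = (x \<otimes>\<^bsub>path_algebra n\<^esub> z) p + (y \<otimes>\<^bsub>path_algebra n\<^esub> z) p"
    by (subst (1 2) path_algebra_mult_eq_conv[where A="?A" and B="?B"]) (use fin in auto)
  finally show "((x \<oplus>\<^bsub>path_algebra n\<^esub> y) \<otimes>\<^bsub>path_algebra n\<^esub> z) p = ((x \<otimes>\<^bsub>path_algebra n\<^esub> z) \<oplus>\<^bsub>path_algebra n\<^esub> (y \<otimes>\<^bsub>path_algebra n\<^esub> z)) p"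
    by (simp add: path_algebra_add)
qed

lemma path_algebra_r_distr:
  assumes "x \<in> carrier (path_algebra n)" "y \<in> carrier (path_algebra n)" "z \<in> carrier (path_algebra n)"
  shows "z \<otimes>\<^bsub>path_algebra n\<^esub> (x \<oplus>\<^bsub>path_algebra n\<^esub> y)
     = (z \<otimes>\<^bsub>path_algebra n\<^esub> x) \<oplus>\<^bsub>path_algebra n\<^esub> (z \<otimes>\<^bsub>path_algebra n\<^esub> (y::path\<Rightarrow>'k::field))"
proof
  fix p
  let ?A = "supp x \<union> supp y" and ?B = "supp z"
  have fin: "finite ?A" "finite ?B" using assms by (auto simp: path_algebra_carrier_iff)
  have "(z \<otimes>\<^bsub>path_algebra n\<^esub> (x \<oplus>\<^bsub>path_algebra n\<^esub> y)) p = path_conv n ?B ?A z (\<lambda>p. x p + y p) p"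
    unfolding path_algebra_add by (rule path_algebra_mult_eq_conv) (use fin supp_add_subset in auto)
  also have "\<dots> = path_conv n ?B ?A z x p + path_conv n ?B ?A z y p" by (rule path_conv_add_right)
  also have "\<dots> = (z \<otimes>\<^bsub>path_algebra n\<^esub> x) p + (z \<otimes>\<^bsub>path_algebra n\<^esub> y) p"
    by (subst (1 2) path_algebra_mult_eq_conv[where A="?B" and B="?A"]) (use fin in auto)
  finally show "(z \<otimes>\<^bsub>path_algebra n\<^esub> (x \<oplus>\<^bsub>path_algebra n\<^esub> y)) p = ((z \<otimes>\<^bsub>path_algebra n\<^esub> x) \<oplus>\<^bsub>path_algebra n\<^esub> (z \<otimes>\<^bsub>path_algebra n\<^esub> y)) p"
    by (simp add: path_algebra_add)
qed

lemma ring_path_algebra: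
  assumes "0 < n"
  shows "ring (path_algebra n :: (path \<Rightarrow> 'k::field) ring)"
proof (rule ringI)
  show "abelian_group (path_algebra n :: (path \<Rightarrow> 'k::field) ring)"
  proof (rule abelian_groupI)
    fix x assume x: "x \<in> carrier (path_algebra n :: (path \<Rightarrow> 'k::field) ring)"
    show "\<exists>y\<in>carrier (path_algebra n). y \<oplus>\<^bsub>path_algebra n\<^esub> x = \<zero>\<^bsub>path_algebra n\<^esub>"
    proof (intro bexI)
      show "(\<lambda>p. - x p) \<oplus>\<^bsub>path_algebra n\<^esub> x = \<zero>\<^bsub>path_algebra n\<^esub>" by (simp add: path_algebra_add path_algebra_zero)
      show "(\<lambda>p. - x p) \<in> carrier (path_algebra n)" using x by (simp add: path_algebra_carrier_iff)
    qed
  next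
    show "\<zero>\<^bsub>path_algebra n\<^esub> \<in> carrier (path_algebra n :: (path \<Rightarrow> 'k::field) ring)"
      by (simp add: path_algebra_carrier_iff path_algebra_zero)
  next
    fix x y assume "x \<in> carrier (path_algebra n :: (path \<Rightarrow> 'k::field) ring)" "y \<in> carrier (path_algebra n :: (path \<Rightarrow> 'k::field) ring)"
    then show "x \<oplus>\<^bsub>path_algebra n\<^esub> y \<in> carrier (path_algebra n)"
      unfolding path_algebra_add by (rule path_algebra_add_closed)
  qed (simp_all add: path_algebra_add path_algebra_zero ac_simps)
  show "monoid (path_algebra n :: (path \<Rightarrow> 'k::field) ring)"
  proof (rule monoidI)
    fix x y z assume "x \<in> carrier (path_algebra n :: (path \<Rightarrow> 'k::field) ring)" "y \<in> carrier (path_algebra n :: (path \<Rightarrow> 'k::field) ring)"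
      "z \<in> carrier (path_algebra n :: (path \<Rightarrow> 'k::field) ring)"
    then show "x \<otimes>\<^bsub>path_algebra n\<^esub> y \<otimes>\<^bsub>path_algebra n\<^esub> z = x \<otimes>\<^bsub>path_algebra n\<^esub> (y \<otimes>\<^bsub>path_algebra n\<^esub> z)"
      by (rule path_algebra_mult_assoc)
  next
    fix x assume "x \<in> carrier (path_algebra n :: (path \<Rightarrow> 'k::field) ring)"
    then show "x \<otimes>\<^bsub>path_algebra n\<^esub> \<one>\<^bsub>path_algebra n\<^esub> = x" using assms by (rule path_algebra_r_one)
  qed (simp_all add: path_algebra_mult_closed path_algebra_one_closed path_algebra_l_one)
qed (simp_all add: path_algebra_l_distr path_algebra_r_distr)

lemma path_algebra_a_inv:
  assumes "0 < n" "f \<in> carrier (path_algebra n)"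
  shows "\<ominus>\<^bsub>path_algebra n\<^esub> f = (\<lambda>p. - (f p :: 'k::field))"
proof -
  interpret R: ring "path_algebra n :: (path \<Rightarrow> 'k) ring" by (rule ring_path_algebra[OF assms(1)])
  show ?thesis
  proof (rule R.minus_equality)
    show "(\<lambda>p. - f p) \<oplus>\<^bsub>path_algebra n\<^esub> f = \<zero>\<^bsub>path_algebra n\<^esub>" by (simp add: path_algebra_add path_algebra_zero)
    show "(\<lambda>p. - f p) \<in> carrier (path_algebra n)" using assms(2) by (simp add: path_algebra_carrier_iff)
  qed (rule assms(2))
qed

lemma supp_rel1:
  "supp (rel1 n \<alpha> \<beta> \<gamma> j) \<subseteq> {(j, [D ((j + n - 1) mod n), U ((j + n - 1) mod n), U j]),
     (j, [U j, D j, U j]), (j, [U j, U ((j + 1) mod n), D ((j + 1) mod n)]), (j, [U j])}"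
  by (auto simp: rel1_def basis_path_def split: if_splits)

lemma supp_rel2:
  "supp (rel2 n \<alpha> \<beta> \<gamma> j) \<subseteq> {((j + 1) mod n, [D j, D ((j + n - 1) mod n), U ((j + n - 1) mod n)]),
     ((j + 1) mod n, [D j, U j, D j]), ((j + 1) mod n, [U ((j + 1) mod n), D ((j + 1) mod n), D j]),
     ((j + 1) mod n, [D j])}"
  by (auto simp: rel2_def basis_path_def split: if_splits)

lemma rel1_carrier: "j < n \<Longrightarrow> rel1 n \<alpha> \<beta> \<gamma> j \<in> carrier (path_algebra n)"
  using Suc_mod_pred_mod[of j n]
  by (intro path_algebra_carrierI[OF _ supp_rel1]) (auto simp: valid_path_def)

lemma rel2_carrier: "j < n \<Longrightarrow> rel2 n \<alpha> \<beta> \<gamma> j \<in> carrier (path_algebra n)"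
  using Suc_mod_pred_mod[of j n]
  by (intro path_algebra_carrierI[OF _ supp_rel2]) (auto simp: valid_path_def)

lemma H_rels_subset_carrier: "H_rels n \<alpha> \<beta> \<gamma> \<subseteq> carrier (path_algebra n)"
  using rel1_carrier rel2_carrier by (auto simp: H_rels_def)

section \<open>A module on which the arrows shift a basis\<close>

fun arr_shift :: "arr \<Rightarrow> nat \<Rightarrow> nat" where
  "arr_shift (U j) m = Suc m"
| "arr_shift (D j) m = m - 1"

fun arrs_shift :: "arr list \<Rightarrow> nat \<Rightarrow> nat" where
  "arrs_shift [] m = m"
| "arrs_shift (a # as) m = arr_shift a (arrs_shift as m)"

lemma arrs_shift_append: "arrs_shift (as @ bs) m = arrs_shift as (arrs_shift bs m)"
  by (induction as) auto

lemma arrs_shift_down_arrs: "arrs_shift (down_arrs n k j) m = m - k"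
  by (induction k arbitrary: j) auto

locale shift_module =
  fixes n i :: nat and \<alpha> \<beta> \<gamma> :: "nat \<Rightarrow> 'k::field"
  assumes n_pos: "0 < n" and i_less: "i < n"
begin

definition vtx :: "nat \<Rightarrow> nat" where
  "vtx m = nat ((int i - int m) mod int n)"

lemma vtx_less: "vtx m < n"
  using n_pos by (simp add: vtx_def nat_less_iff)

lemma vtx_0: "vtx 0 = i"
  using i_less by (simp add: vtx_def)

lemma vtx_eq_Suc_mod: "vtx m = (vtx (Suc m) + 1) mod n"
proof -
  have "int ((vtx (Suc m) + 1) mod n) = (int (vtx (Suc m)) + 1) mod int n"
    by (simp add: zmod_int add.commute)
  also have "\<dots> = ((int i - int (Suc m)) mod int n + 1) mod int n"
    using n_pos by (simp add: vtx_def)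
  also have "\<dots> = ((int i - int (Suc m)) + 1) mod int n"
    by (metis mod_add_left_eq)
  also have "\<dots> = (int i - int m) mod int n"
    by simp
  finally show ?thesis unfolding vtx_def by (metis nat_int)
qed

lemma vtx_Suc_eq_iff:
  assumes "j < n"
  shows "vtx (Suc m) = j \<longleftrightarrow> vtx m = (j + 1) mod n"
proof
  assume "vtx (Suc m) = j"
  then show "vtx m = (j + 1) mod n" using vtx_eq_Suc_mod[of m] by simp
next
  assume "vtx m = (j + 1) mod n"
  then have "((vtx (Suc m) + 1) mod n + n - 1) mod n = ((j + 1) mod n + n - 1) mod n"
    using vtx_eq_Suc_mod[of m] by simp
  then show "vtx (Suc m) = j" using pred_mod_Suc_mod vtx_less assms by simp
qed

text \<open>\<^term>\<open>coef (Suc m)\<close> is the scalar \<open>c\<^sub>m\<close> of the header, so \<^term>\<open>coef 0\<close> is \<open>c\<^sub>-\<^sub>1 = 0\<close>.\<close>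

fun coef :: "nat \<Rightarrow> 'k" where
  "coef 0 = 0"
| "coef (Suc 0) = \<gamma> i + 1"
| "coef (Suc (Suc m)) = \<alpha> (vtx (Suc m)) * coef (Suc m) + \<beta> (vtx (Suc m)) * coef m + \<gamma> (vtx (Suc m))"

declare coef.simps(3) [simp del]

text \<open>No vertex test is needed here: for a valid path, the test on the final index made in
  \<^term>\<open>path_act\<close> forces all the intermediate ones (lemma \<open>vtx_before_arrs\<close>).\<close>

fun arr_scalar :: "arr \<Rightarrow> nat \<Rightarrow> 'k" where
  "arr_scalar (U j) m = coef (Suc m)"
| "arr_scalar (D j) m = (if 0 < m then 1 else 0)"

fun arrs_scalar :: "arr list \<Rightarrow> nat \<Rightarrow> 'k" where
  "arrs_scalar [] m = 1"
| "arrs_scalar (a # as) m = arrs_scalar as m * arr_scalar a (arrs_shift as m)"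

lemma arrs_scalar_append:
  "arrs_scalar (as @ bs) m = arrs_scalar bs m * arrs_scalar as (arrs_shift bs m)"
  by (induction as) (auto simp: arrs_shift_append)

lemma arrs_scalar_down_arrs: "arrs_scalar (down_arrs n k j) m = (if k \<le> m then 1 else 0)"
  by (induction k arbitrary: j) (auto simp: arrs_shift_down_arrs)

lemma vtx_before_arr:
  assumes "arr_idx a < n" "arr_scalar a m \<noteq> 0" "vtx (arr_shift a m) = arr_src n a"
  shows "vtx m = arr_tgt n a"
proof (cases a)
  case (U j)
  then show ?thesis using assms vtx_Suc_eq_iff[of j m] by simp
next
  case (D j)
  then obtain k where "m = Suc k" using assms(2) by (cases m) auto
  then show ?thesis using assms D vtx_Suc_eq_iff[of j k] vtx_eq_Suc_mod[of k] by simp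
qed

lemma vtx_before_arrs:
  "valid_arrs n j as \<Longrightarrow> arrs_scalar as m \<noteq> 0 \<Longrightarrow> vtx (arrs_shift as m) = j
    \<Longrightarrow> vtx m = end_vertex n j as"
proof (induction as arbitrary: j)
  case (Cons a as)
  then have "vtx (arrs_shift as m) = arr_tgt n a"
    using vtx_before_arr[of a "arrs_shift as m"] by auto
  then show ?case using Cons by simp
qed simp

definition path_act :: "path \<Rightarrow> nat \<Rightarrow> nat \<Rightarrow> 'k" where
  "path_act p m m' = (if m' = arrs_shift (snd p) m \<and> vtx m' = fst p then arrs_scalar (snd p) m else 0)"

lemma path_act_cat:
  assumes "valid_path n q"
  shows "path_act r m m' * path_act q m' m''
    = (if m' = arrs_shift (snd r) m then (case path_cat n q r of None \<Rightarrow> 0 | Some p \<Rightarrow> path_act p m m'') else 0)"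
proof -
  obtain j as where q: "q = (j, as)" by (cases q)
  obtain j' bs where r: "r = (j', bs)" by (cases r)
  have valid: "valid_arrs n j as" using assms q by (simp add: valid_path_def)
  have junction: "vtx m' = end_vertex n j as"
    if "arrs_scalar as m' \<noteq> 0" "vtx (arrs_shift as m') = j" for m'
    using vtx_before_arrs[OF valid that] .
  show ?thesis
    using junction[of "arrs_shift bs m"]
    by (auto simp: path_act_def path_cat_def q r arrs_shift_append arrs_scalar_append)
qed

lemma sum_path_act_cat:
  assumes "valid_path n q" "finite M" "arrs_shift (snd r) m \<in> M"
  shows "(\<Sum>m'\<in>M. path_act r m m' * path_act q m' m'')
    = (case path_cat n q r of None \<Rightarrow> 0 | Some p \<Rightarrow> path_act p m m'')"
  using assms by (simp add: path_act_cat sum.delta')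

text \<open>\<^term>\<open>act f m m'\<close> is the coefficient of \<open>e\<^sub>m\<^sub>'\<close> in \<open>f e\<^sub>m\<close>.\<close>

definition act :: "(path \<Rightarrow> 'k) \<Rightarrow> nat \<Rightarrow> nat \<Rightarrow> 'k" where
  "act f m m' = (\<Sum>p\<in>supp f. f p * path_act p m m')"

lemma act_eq_sum:
  assumes "finite S" "supp f \<subseteq> S"
  shows "act f m m' = (\<Sum>p\<in>S. f p * path_act p m m')"
  unfolding act_def using assms by (intro sum.mono_neutral_left) auto

lemma act_add:
  assumes "f \<in> carrier (path_algebra n)" "g \<in> carrier (path_algebra n)"
  shows "act (f \<oplus>\<^bsub>path_algebra n\<^esub> g) m m' = act f m m' + act g m m'"
proof -
  let ?S = "supp f \<union> supp g"
  have fin: "finite ?S" using assms by (auto simp: path_algebra_carrier_iff)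
  have "act (f \<oplus>\<^bsub>path_algebra n\<^esub> g) m m' = (\<Sum>p\<in>?S. (f p + g p) * path_act p m m')"
    unfolding path_algebra_add by (rule act_eq_sum[OF fin supp_add_subset])
  also have "\<dots> = (\<Sum>p\<in>?S. f p * path_act p m m') + (\<Sum>p\<in>?S. g p * path_act p m m')"
    by (simp add: distrib_right sum.distrib)
  also have "\<dots> = act f m m' + act g m m'"
    using fin by (subst (1 2) act_eq_sum[OF fin]) auto
  finally show ?thesis .
qed

lemma act_uminus: "act (\<lambda>p. - f p) m m' = - act f m m'"
  by (simp add: act_def sum_negf)

lemma act_zero: "act (\<lambda>p. 0) m m' = 0"
  by (simp add: act_def)

lemma act_mult_eq_double_sum:
  assumes "f \<in> carrier (path_algebra n)" "g \<in> carrier (path_algebra n)"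
  shows "act (f \<otimes>\<^bsub>path_algebra n\<^esub> g) m m''
    = (\<Sum>q\<in>supp f. \<Sum>r\<in>supp g. f q * g r * (case path_cat n q r of None \<Rightarrow> 0 | Some p \<Rightarrow> path_act p m m''))"
proof -
  let ?T = "path_products n (supp f) (supp g)"
  have fin: "finite (supp f)" "finite (supp g)" using assms by (auto simp: path_algebra_carrier_iff)
  then have fin_T: "finite ?T" by (rule finite_path_products)
  have "act (f \<otimes>\<^bsub>path_algebra n\<^esub> g) m m''
      = (\<Sum>p\<in>?T. (f \<otimes>\<^bsub>path_algebra n\<^esub> g) p * path_act p m m'')"
    by (rule act_eq_sum[OF fin_T supp_path_algebra_mult])
  also have "\<dots> = (\<Sum>p\<in>?T. \<Sum>q\<in>supp f. \<Sum>r\<in>supp g.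
      if path_cat n q r = Some p then f q * g r * path_act p m m'' else 0)"
    unfolding path_algebra_mult path_conv_def sum_distrib_right by (intro sum.cong refl) auto
  also have "\<dots> = (\<Sum>q\<in>supp f. \<Sum>r\<in>supp g. \<Sum>p\<in>?T. if path_cat n q r = Some p then f q * g r * path_act p m m'' else 0)"
    by (rule sum_rotate3)
  also have "\<dots> = (\<Sum>q\<in>supp f. \<Sum>r\<in>supp g. f q * g r * (case path_cat n q r of None \<Rightarrow> 0 | Some p \<Rightarrow> path_act p m m''))"
    by (intro sum.cong refl, subst sum_if_Some[OF fin_T]) (auto simp: path_products_def split: option.split)
  finally show ?thesis .
qed

lemma act_mult:
  assumes f: "f \<in> carrier (path_algebra n)" and g: "g \<in> carrier (path_algebra n)"
  shows "act (f \<otimes>\<^bsub>path_algebra n\<^esub> g) m m''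
    = (\<Sum>m'\<in>(\<lambda>r. arrs_shift (snd r) m) ` supp g. act g m m' * act f m' m'')"
proof -
  let ?M = "(\<lambda>r. arrs_shift (snd r) m) ` supp g"
  have fin_M: "finite ?M" using g by (simp add: path_algebra_carrier_iff)
  have "(\<Sum>m'\<in>?M. act g m m' * act f m' m'')
      = (\<Sum>m'\<in>?M. \<Sum>r\<in>supp g. \<Sum>q\<in>supp f. g r * f q * (path_act r m m' * path_act q m' m''))"
    unfolding act_def sum_product by (simp add: ac_simps)
  also have "\<dots> = (\<Sum>r\<in>supp g. \<Sum>q\<in>supp f. \<Sum>m'\<in>?M. g r * f q * (path_act r m m' * path_act q m' m''))"
    by (rule sum_rotate3)
  also have "\<dots> = (\<Sum>r\<in>supp g. \<Sum>q\<in>supp f. f q * g r * (case path_cat n q r of None \<Rightarrow> 0 | Some p \<Rightarrow> path_act p m m''))"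
  proof (intro sum.cong refl)
    fix r q assume r: "r \<in> supp g" and q: "q \<in> supp f"
    have "valid_path n q" using f q unfolding path_algebra_carrier_iff by blast
    then have "(\<Sum>m'\<in>?M. path_act r m m' * path_act q m' m'')
        = (case path_cat n q r of None \<Rightarrow> 0 | Some p \<Rightarrow> path_act p m m'')"
      using r fin_M by (simp add: sum_path_act_cat)
    then show "(\<Sum>m'\<in>?M. g r * f q * (path_act r m m' * path_act q m' m''))
        = f q * g r * (case path_cat n q r of None \<Rightarrow> 0 | Some p \<Rightarrow> path_act p m m'')"
      by (simp add: sum_distrib_left[symmetric] mult.commute)
  qed
  also have "\<dots> = act (f \<otimes>\<^bsub>path_algebra n\<^esub> g) m m''"
    using act_mult_eq_double_sum[OF f g] by (simp add: sum.swap[of _ "supp g"])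
  finally show ?thesis by simp
qed

lemma act_rel1:
  assumes "j < n"
  shows "act (rel1 n \<alpha> \<beta> \<gamma> j) m m' = 0"
proof -
  let ?p1 = "(j, [D ((j + n - 1) mod n), U ((j + n - 1) mod n), U j])"
    and ?p2 = "(j, [U j, D j, U j])"
    and ?p3 = "(j, [U j, U ((j + 1) mod n), D ((j + 1) mod n)])"
    and ?p4 = "(j, [U j])"
  have "act (rel1 n \<alpha> \<beta> \<gamma> j) m m' = (\<Sum>p\<in>{?p1, ?p2, ?p3, ?p4}. rel1 n \<alpha> \<beta> \<gamma> j p * path_act p m m')"
    by (rule act_eq_sum[OF _ supp_rel1]) simp
  also have "\<dots> = path_act ?p1 m m' - \<alpha> j * path_act ?p2 m m' - \<beta> j * path_act ?p3 m m' - \<gamma> j * path_act ?p4 m m'"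
    by (simp add: rel1_def basis_path_def algebra_simps)
  also have "\<dots> = 0"
    by (cases m) (auto simp: path_act_def coef.simps(3) algebra_simps)
  finally show ?thesis .
qed

lemma act_rel2:
  assumes "j < n"
  shows "act (rel2 n \<alpha> \<beta> \<gamma> j) m m' = 0"
proof -
  let ?p1 = "((j + 1) mod n, [D j, D ((j + n - 1) mod n), U ((j + n - 1) mod n)])"
    and ?p2 = "((j + 1) mod n, [D j, U j, D j])"
    and ?p3 = "((j + 1) mod n, [U ((j + 1) mod n), D ((j + 1) mod n), D j])"
    and ?p4 = "((j + 1) mod n, [D j])"
  have "act (rel2 n \<alpha> \<beta> \<gamma> j) m m' = (\<Sum>p\<in>{?p1, ?p2, ?p3, ?p4}. rel2 n \<alpha> \<beta> \<gamma> j p * path_act p m m')"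
    by (rule act_eq_sum[OF _ supp_rel2]) simp
  also have "\<dots> = path_act ?p1 m m' - \<alpha> j * path_act ?p2 m m' - \<beta> j * path_act ?p3 m m' - \<gamma> j * path_act ?p4 m m'"
    by (simp add: rel2_def basis_path_def algebra_simps)
  also have "\<dots> = 0"
  proof (cases m)
    case (Suc k)
    show ?thesis
    proof (cases "vtx k = (j + 1) mod n")
      case True
      then have "vtx (Suc k) = j" using vtx_Suc_eq_iff assms by blast
      then show ?thesis using Suc True
        by (cases k) (auto simp: path_act_def coef.simps(3) algebra_simps)
    qed (auto simp: Suc path_act_def)
  qed (simp add: path_act_def)
  finally show ?thesis .
qed

definition tail_annihilator :: "nat \<Rightarrow> (path \<Rightarrow> 'k) set" where
  "tail_annihilator k = {f \<in> carrier (path_algebra n). \<forall>m\<ge>k. \<forall>m'. act f m m' = 0}"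

lemma tail_annihilator_mono: "k \<le> k' \<Longrightarrow> tail_annihilator k \<subseteq> tail_annihilator k'"
  by (auto simp: tail_annihilator_def)

lemma additive_subgroup_tail_annihilator: "additive_subgroup (tail_annihilator k) (path_algebra n)"
proof (rule additive_subgroup_closedI[OF ring_path_algebra[OF n_pos]])
  show "tail_annihilator k \<subseteq> carrier (path_algebra n)" by (auto simp: tail_annihilator_def)
  show "\<zero>\<^bsub>path_algebra n\<^esub> \<in> tail_annihilator k"
    by (simp add: tail_annihilator_def path_algebra_zero act_zero path_algebra_carrier_iff)
  show "f \<oplus>\<^bsub>path_algebra n\<^esub> g \<in> tail_annihilator k"
    if "f \<in> tail_annihilator k" "g \<in> tail_annihilator k" for f g
  proof -
    have carr: "f \<in> carrier (path_algebra n)" "g \<in> carrier (path_algebra n)"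
      using that by (auto simp: tail_annihilator_def)
    then have "f \<oplus>\<^bsub>path_algebra n\<^esub> g \<in> carrier (path_algebra n)"
      by (simp add: path_algebra_add path_algebra_add_closed)
    then show ?thesis using that by (auto simp: tail_annihilator_def act_add[OF carr])
  qed
  show "\<ominus>\<^bsub>path_algebra n\<^esub> f \<in> tail_annihilator k" if "f \<in> tail_annihilator k" for f
    using that n_pos
    by (auto simp: tail_annihilator_def path_algebra_a_inv act_uminus path_algebra_carrier_iff)
qed

lemma act_mult_eq_0:
  assumes "f \<in> carrier (path_algebra n)" "g \<in> carrier (path_algebra n)"
    and "(\<forall>m'. act g m m' = 0) \<or> (\<forall>m' m''. act f m' m'' = 0)"
  shows "act (f \<otimes>\<^bsub>path_algebra n\<^esub> g) m m'' = 0"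
  using assms by (auto simp: act_mult)

lemma left_ideal_tail_annihilator: "left_ideal (tail_annihilator k) (path_algebra n)"
  using additive_subgroup_tail_annihilator act_mult_eq_0
  by (auto simp: left_ideal_def tail_annihilator_def path_algebra_mult_closed)

lemma ideal_tail_annihilator_0: "ideal (tail_annihilator 0) (path_algebra n)"
proof (rule idealI[OF ring_path_algebra[OF n_pos]])
  show "subgroup (tail_annihilator 0) (add_monoid (path_algebra n))"
    using additive_subgroup_tail_annihilator by (rule additive_subgroup.a_subgroup)
  show "g \<otimes>\<^bsub>path_algebra n\<^esub> f \<in> tail_annihilator 0"
    if "f \<in> tail_annihilator 0" "g \<in> carrier (path_algebra n)" for f g
    using that left_ideal_tail_annihilator by (simp add: left_ideal_def)
  show "f \<otimes>\<^bsub>path_algebra n\<^esub> g \<in> tail_annihilator 0"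
    if "f \<in> tail_annihilator 0" "g \<in> carrier (path_algebra n)" for f g
    using that act_mult_eq_0 by (auto simp: tail_annihilator_def path_algebra_mult_closed)
qed

lemma H_rels_subset_tail_annihilator: "H_rels n \<alpha> \<beta> \<gamma> \<subseteq> tail_annihilator 0"
  using rel1_carrier rel2_carrier act_rel1 act_rel2 by (auto simp: H_rels_def tail_annihilator_def)

text \<open>The element \<open>x\<^sub>N\<close> of the header is \<^term>\<open>witness N\<close>; its three paths are
  \<open>d\<^sub>i\<^sub>-\<^sub>1 u\<^sub>i\<^sub>-\<^sub>1 d\<^sup>N\<close>, \<open>u\<^sub>i d\<^sub>i d\<^sup>N\<close> and \<open>d\<^sup>N\<close>.\<close>

definition du_path :: "nat \<Rightarrow> path" where
  "du_path N = (i, D ((i + n - 1) mod n) # U ((i + n - 1) mod n) # down_arrs n N i)"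

definition ud_path :: "nat \<Rightarrow> path" where
  "ud_path N = (i, U i # D i # down_arrs n N i)"

definition d_path :: "nat \<Rightarrow> path" where
  "d_path N = (i, down_arrs n N i)"

lemmas witness_paths_def = du_path_def ud_path_def d_path_def

definition witness :: "nat \<Rightarrow> path \<Rightarrow> 'k" where
  "witness N = (\<lambda>p. basis_path (du_path N) p - \<alpha> i * basis_path (ud_path N) p - \<gamma> i * basis_path (d_path N) p)"

lemma supp_witness: "supp (witness N) \<subseteq> {du_path N, ud_path N, d_path N}"
  by (auto simp: witness_def basis_path_def split: if_splits)

lemma witness_carrier: "witness N \<in> carrier (path_algebra n)"
  using i_less Suc_mod_pred_mod[OF i_less] valid_down_arrs[OF i_less, of N]
  by (intro path_algebra_carrierI[OF _ supp_witness]) (auto simp: witness_paths_def valid_path_def)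

lemma act_witness:
  "act (witness N) m m'
    = path_act (du_path N) m m' - \<alpha> i * path_act (ud_path N) m m' - \<gamma> i * path_act (d_path N) m m'"
proof -
  have "du_path N \<noteq> ud_path N" "du_path N \<noteq> d_path N" "ud_path N \<noteq> d_path N"
    using U_notin_down_arrs[of "(i + n - 1) mod n" n N i] U_notin_down_arrs[of i n N i]
    by (auto simp: witness_paths_def dest: sym)
  moreover have "act (witness N) m m'
      = (\<Sum>p\<in>{du_path N, ud_path N, d_path N}. witness N p * path_act p m m')"
    by (rule act_eq_sum[OF _ supp_witness]) simp
  ultimately show ?thesis by (simp add: witness_def basis_path_def algebra_simps)
qed

lemma act_witness_at_bottom: "act (witness N) N 0 = 1"
  by (simp add: act_witness witness_paths_def path_act_def arrs_shift_down_arrs arrs_scalar_down_arrs vtx_0)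

lemma act_witness_above:
  assumes "\<beta> i = 0" "N < m"
  shows "act (witness N) m m' = 0"
proof -
  obtain l where l: "m - N = Suc l" "m - Suc N = l" using assms(2) by (metis Suc_diff_Suc diff_Suc_Suc)
  then show ?thesis
    using assms by (auto simp: act_witness witness_paths_def path_act_def arrs_shift_down_arrs arrs_scalar_down_arrs coef.simps(3))
qed

lemma witness_in_tail_annihilator:
  assumes "\<beta> i = 0"
  shows "witness N \<in> tail_annihilator (Suc N) - tail_annihilator N"
proof
  show "witness N \<in> tail_annihilator (Suc N)"
    using witness_carrier act_witness_above[OF assms] by (auto simp: tail_annihilator_def Suc_le_eq)
  show "witness N \<notin> tail_annihilator N"
    using act_witness_at_bottom[of N] by (force simp: tail_annihilator_def)
qed

lemma not_left_noetherian_H_alg: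
  assumes "\<beta> i = 0"
  shows "\<not> left_noetherian (H_alg n \<alpha> \<beta> \<gamma>)"
proof -
  let ?I = "genideal (path_algebra n) (H_rels n \<alpha> \<beta> \<gamma>)"
  have ring: "ring (path_algebra n :: (path \<Rightarrow> 'k) ring)" by (rule ring_path_algebra[OF n_pos])
  interpret I: ideal ?I "path_algebra n"
    by (rule ring.genideal_ideal[OF ring H_rels_subset_carrier])
  have "?I \<subseteq> tail_annihilator 0"
    by (rule ring.genideal_minimal[OF ring ideal_tail_annihilator_0 H_rels_subset_tail_annihilator])
  then have kernel: "a_kernel (path_algebra n) (path_algebra n Quot ?I) ((+>\<^bsub>path_algebra n\<^esub>) ?I)
      \<subseteq> tail_annihilator k" for k
    using tail_annihilator_mono[of 0 k] by (simp add: I.a_kernel_rcos)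
  show ?thesis
    unfolding H_alg_def
  proof (rule ring_hom_ring.not_left_noetherian_image[OF I.rcos_ring_hom_ring I.rcos_surj _ kernel])
    show "left_ideal (tail_annihilator k) (path_algebra n)" for k by (rule left_ideal_tail_annihilator)
    show "tail_annihilator k \<subseteq> tail_annihilator (Suc k)" for k by (simp add: tail_annihilator_mono)
    show "\<not> tail_annihilator (Suc k) \<subseteq> tail_annihilator k" for k
      using witness_in_tail_annihilator[OF assms, of k] by blast
  qed
qed

end

theorem lemma4p1:
  fixes n :: nat and \<alpha> \<beta> \<gamma> :: "nat \<Rightarrow> 'k::{alg_closed_field, field_char_0}"
  assumes "n \<ge> 1"
    and "\<exists>i<n. \<beta> i = 0"
  shows "\<not> noetherian (H_alg n \<alpha> \<beta> \<gamma>)"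
proof -
  obtain i where "i < n" "\<beta> i = 0" using assms(2) by blast
  interpret shift_module n i \<alpha> \<beta> \<gamma> by unfold_locales (use assms(1) \<open>i < n\<close> in auto)
  show ?thesis using not_left_noetherian_H_alg[OF \<open>\<beta> i = 0\<close>] by (simp add: noetherian_def)
qed

end
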